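(* Let $N\ge 1$ and let $\lambda,\mu$ be complex parameters. Consider fields $x,\widetilde{x},\widehat{x},\widehat{\widetilde{x}}\in\mathbb{C}^N$ with indices taken modulo $N$. Suppose that $x,\widetilde{x},\widehat{x}$ satisfy, for all $k$, $$(E)\qquad (\widetilde{x}_k-x_k)(\lambda+x_k-\widetilde{x}_{k-1})=(\widehat{x}_k-x_k)(\mu+x_k-\widehat{x}_{k-1}).$$ Consider the superposition formulas $$(S1)\qquad (\widehat{\widetilde{x}}_k-\widehat{x}_k)(\lambda+x_{k+1}-\widetilde{x}_k)=(\widehat{\widetilde{x}}_k-\widetilde{x}_k)(\mu+x_{k+1}-\widehat{x}_k),$$ $$(S2)\qquad (\widetilde{x}_{k+1}-x_{k+1})(\lambda+\widehat{x}_{k+1}-\widehat{\widetilde{x}}_k)=(\widehat{x}_{k+1}-x_{k+1})(\mu+\widetilde{x}_{k+1}-\widehat{\widetilde{x}}_k).$$ Then, by virtue of $(E)$, (S1) and (S2) are equivalent, and if $\widehat{\widetilde{x}}$ is defined by either of them, then for all $k$: $$(E_1)\quad (\widetilde{x}_k-x_k)(\lambda+x_{k+1}-\widetilde{x}_k)=(\widehat{\widetilde{x}}_k-\widetilde{x}_k)(\mu+\widetilde{x}_k-\widehat{\widetilde{x}}_{k-1}),$$ $$(E_2)\quad (\widehat{x}_k-x_k)(\mu+x_{k+1}-\widehat{x}_k)=(\widehat{\widetilde{x}}_k-\widehat{x}_k)(\lambda+\widehat{x}_k-\widehat{\widetilde{x}}_{k-1}),$$ $$(E_{12})\quad (\w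idehat{\widetilde{x}}_k-\widehat{x}_k)(\lambda+\widehat{x}_{k+1}-\widehat{\widetilde{x}}_k)=(\widehat{\widetilde{x}}_k-\widetilde{x}_k)(\mu+\widetilde{x}_{k+1}-\widehat{\widetilde{x}}_k).$$
   Context: These are the corner equations for two Bäcklund transformations $F_\lambda,F_\mu$ of the periodic dual Toda lattice $\ddot x_k=\dot x_k(x_{k+1}-2x_k+x_{k-1})$, where $F_\lambda:(x,p)\mapsto(\widetilde x,\widetilde p)$ is given by $e^{p_k}=(\widetilde x_k-x_k)(\lambda+x_k-\widetilde x_{k-1})$, $e^{\widetilde p_k}=(\widetilde x_k-x_k)(\lambda+x_{k+1}-\widetilde x_k)$; hats denote the action of $F_\mu$. *)

theory Defs
  imports Complex_Main
begin

end

theory Submission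
  imports Defs
begin

text \<open>
  Equation (S1) is linear in
  \<open>xht k\<close> with leading coefficient \<open>lam + xh k - mu - xt k\<close>, so it determines
  \<open>xht k\<close> rationally in terms of \<open>x (k+1), xt k, xh k\<close>. Substituting this value,
  (S2) and the corner equations (E1), (E2), (E12) become polynomial
  identities modulo (E) at sites \<open>k\<close> and \<open>k+1\<close>; conversely (S2), read as a linear
  equation for \<open>xht k\<close> with leading coefficient \<open>xt (k+1) - xh (k+1)\<close>, gives back (S1).
  In the lemmas below \<open>t0, h0, X\<close> stand for \<open>xt k, xh k, xht k\<close>, the suffix \<open>1\<close> for
  site \<open>k+1\<close> and \<open>m\<close> for site \<open>k-1\<close>.
\<close>

lemma superposition_S1_imp_S2:
  fixes l m x1 t0 h0 t1 h1 X :: "'a :: field"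
  assumes "(t1 - x1) * (l + x1 - t0) = (h1 - x1) * (m + x1 - h0)"
    and "l + h0 - m - t0 \<noteq> 0"
    and "(X - h0) * (l + x1 - t0) = (X - t0) * (m + x1 - h0)"
  shows "(t1 - x1) * (l + h1 - X) = (h1 - x1) * (m + t1 - X)"
  using assms by algebra

lemma superposition_S2_imp_S1:
  fixes l m x1 t0 h0 t1 h1 X :: "'a :: field"
  assumes "(t1 - x1) * (l + x1 - t0) = (h1 - x1) * (m + x1 - h0)"
    and "h1 \<noteq> t1"
    and "(t1 - x1) * (l + h1 - X) = (h1 - x1) * (m + t1 - X)"
  shows "(X - h0) * (l + x1 - t0) = (X - t0) * (m + x1 - h0)"
  using assms by algebra

lemma corner_E1_of_S1:
  fixes l m x0 x1 t0 h0 tm hm X Xm :: "'a :: field"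
  assumes "(t0 - x0) * (l + x0 - tm) = (h0 - x0) * (m + x0 - hm)"
    and "l + h0 - m - t0 \<noteq> 0" and "l + hm - m - tm \<noteq> 0"
    and "(X - h0) * (l + x1 - t0) = (X - t0) * (m + x1 - h0)"
    and "(Xm - hm) * (l + x0 - tm) = (Xm - tm) * (m + x0 - hm)"
  shows "(t0 - x0) * (l + x1 - t0) = (X - t0) * (m + t0 - Xm)"
  using assms by algebra

text \<open>(E2) is (E1) with the roles of the two transformations exchanged.\<close>

lemma corner_E2_of_S1:
  fixes l m x0 x1 t0 h0 tm hm X Xm :: "'a :: field"
  assumes "(t0 - x0) * (l + x0 - tm) = (h0 - x0) * (m + x0 - hm)"
    and "l + h0 - m - t0 \<noteq> 0" and "l + hm - m - tm \<noteq> 0"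
    and "(X - h0) * (l + x1 - t0) = (X - t0) * (m + x1 - h0)"
    and "(Xm - hm) * (l + x0 - tm) = (Xm - tm) * (m + x0 - hm)"
  shows "(h0 - x0) * (m + x1 - h0) = (X - h0) * (l + h0 - Xm)"
proof -
  have "(h0 - x0) * (m + x0 - hm) = (t0 - x0) * (l + x0 - tm)"
    using assms(1) by simp
  moreover have "m + t0 - l - h0 \<noteq> 0" "m + tm - l - hm \<noteq> 0"
    using assms(2,3) by (simp_all add: algebra_simps)
  moreover have "(X - t0) * (m + x1 - h0) = (X - h0) * (l + x1 - t0)"
    "(Xm - tm) * (m + x0 - hm) = (Xm - hm) * (l + x0 - tm)"
    using assms(4,5) by simp_all
  ultimately show ?thesis
    by (rule corner_E1_of_S1)
qed

lemma corner_E12_of_S1: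
  fixes l m x1 t0 h0 t1 h1 X :: "'a :: field"
  assumes "(t1 - x1) * (l + x1 - t0) = (h1 - x1) * (m + x1 - h0)"
    and "l + h0 - m - t0 \<noteq> 0"
    and "(X - h0) * (l + x1 - t0) = (X - t0) * (m + x1 - h0)"
  shows "(X - h0) * (l + h1 - X) = (X - t0) * (m + t1 - X)"
  using assms by algebra

theorem theorem4:
  fixes N :: nat and lam mu :: complex
    and x xt xh xht :: "int \<Rightarrow> complex"
  assumes N: "N \<ge> 1"
    and per: "\<And>k. x (k + int N) = x k" "\<And>k. xt (k + int N) = xt k"
             "\<And>k. xh (k + int N) = xh k" "\<And>k. xht (k + int N) = xht k"
    and E: "\<And>k. (xt k - x k) * (lam + x k - xt (k - 1))
                 = (xh k - x k) * (mu + x k - xh (k - 1))"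
    and gen1: "\<And>k. lam + xh k - mu - xt k \<noteq> 0"
    and gen2: "\<And>k. xh k \<noteq> xt k"
  shows "((\<forall>k. (xht k - xh k) * (lam + x (k + 1) - xt k)
                 = (xht k - xt k) * (mu + x (k + 1) - xh k))
          \<longleftrightarrow>
          (\<forall>k. (xt (k + 1) - x (k + 1)) * (lam + xh (k + 1) - xht k)
                 = (xh (k + 1) - x (k + 1)) * (mu + xt (k + 1) - xht k)))
       \<and> (((\<forall>k. (xht k - xh k) * (lam + x (k + 1) - xt k)
                   = (xht k - xt k) * (mu + x (k + 1) - xh k))
           \<or> (\<forall>k. (xt (k + 1) - x (k + 1)) * (lam + xh (k + 1) - xht k)
                   = (xh (k + 1) - x (k + 1)) * (mu + xt (k + 1) - xht k)))
          \<longrightarrow> (\<forall>k.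
                (xt k - x k) * (lam + x (k + 1) - xt k)
                  = (xht k - xt k) * (mu + xt k - xht (k - 1))
              \<and> (xh k - x k) * (mu + x (k + 1) - xh k)
                  = (xht k - xh k) * (lam + xh k - xht (k - 1))
              \<and> (xht k - xh k) * (lam + xh (k + 1) - xht k)
                  = (xht k - xt k) * (mu + xt (k + 1) - xht k)))"
    (is "((\<forall>k. ?S1 k) \<longleftrightarrow> (\<forall>k. ?S2 k)) \<and> (_ \<longrightarrow> (\<forall>k. ?corners k))")
proof -
  have E_next: "(xt (k + 1) - x (k + 1)) * (lam + x (k + 1) - xt k)
                  = (xh (k + 1) - x (k + 1)) * (mu + x (k + 1) - xh k)" for k
    using E[of "k + 1"] by simp
  have S1_iff_S2: "?S1 k \<longleftrightarrow> ?S2 k" for k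
    using superposition_S1_imp_S2[OF E_next gen1] superposition_S2_imp_S1[OF E_next gen2]
    by blast
  have corners: "?corners k" if S1: "\<forall>k. ?S1 k" for k
  proof -
    have "?S1 (k - 1)" "?S1 k"
      using S1 by blast+
    then have S1_prev: "(xht (k - 1) - xh (k - 1)) * (lam + x k - xt (k - 1))
                          = (xht (k - 1) - xt (k - 1)) * (mu + x k - xh (k - 1))"
      and S1_here: "?S1 k"
      by simp_all
    show ?thesis
      using corner_E1_of_S1[OF E gen1 gen1 S1_here S1_prev]
        corner_E2_of_S1[OF E gen1 gen1 S1_here S1_prev]
        corner_E12_of_S1[OF E_next gen1 S1_here]
      by blast
  qed
  show ?thesis
    using S1_iff_S2 corners by blast
qed

end
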